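(* For every $k\ge 1$, the bi-hypergraph obtained from $\mathcal H_{2k}$ by removing the edge $\{v_{2k,1},v_{2k,2},v_{2k,3}\}$ and adding the edges $\{v_{1,j},v_{2k,j+1},v_{2k,j+2}\}$ for all $j\in[3]$ is minimal uncolorable.
   Context: A bi-hypergraph $\mathcal H=(V,E)$ consists of a finite vertex set $V$ and a set $E$ of subsets of $V$, called edges, with no edge contained in another. A mapping $f:V\to\mathbb N$ is a proper coloring of $\mathcal H$ if $1<|f(e)|<|e|$ for every $e\in E$, where $f(e)=\{f(v):v\in e\}$. $\mathcal H$ is colorable if it has a proper coloring, and uncolorable otherwise. A subhypergraph of $\mathcal H$ is a bi-hypergraph $(V',E')$ with $V'\subseteq V$, $E'\subseteq E$; $\mathcal H$ is minimal uncolorable if it is uncolorable but every proper subhypergraph of it is colorable. For $k\ge 2$, $\mathcal H_k$ is the $3$-uniform bi-hypergraph with vertex set $\{v_{i,j}: i\in[k], j\in[3]\}$ (all distinct), with the convention $v_{i,4}=v_{i,1}$, $v_{i,5}=v_{i,2}$, whose edges are the sets $\{v_{i,1},v_{i,2},v_{i,3}\}$ for all $i\in[k]$ and the sets $\{v_{q+1,j},v_{q,j},v_{q,j+t}\}$ for all $q\in[k-1]$, $j\in[3]$, $t\in\{1,2\}$. *)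

theory Defs
  imports Main
begin

definition bihypergraph :: "'a set \<times> 'a set set \<Rightarrow> bool" where
  "bihypergraph H \<longleftrightarrow> finite (fst H) \<and> (\<forall>e\<in>snd H. e \<subseteq> fst H) \<and>
     (\<forall>e\<in>snd H. \<forall>e'\<in>snd H. e \<subseteq> e' \<longrightarrow> e = e')"

definition proper_coloring :: "'a set \<times> 'a set set \<Rightarrow> ('a \<Rightarrow> nat) \<Rightarrow> bool" where
  "proper_coloring H f \<longleftrightarrow> (\<forall>e\<in>snd H. 1 < card (f ` e) \<and> card (f ` e) < card e)"

definition colorable :: "'a set \<times> 'a set set \<Rightarrow> bool" where
  "colorable H \<longleftrightarrow> (\<exists>f. proper_coloring H f)"

definition subhypergraph :: "'a set \<times> 'a set set \<Rightarrow> 'a set \<times> 'a set set \<Rightarrow> bool" where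
  "subhypergraph H' H \<longleftrightarrow> bihypergraph H' \<and> fst H' \<subseteq> fst H \<and> snd H' \<subseteq> snd H"

definition minimal_uncolorable :: "'a set \<times> 'a set set \<Rightarrow> bool" where
  "minimal_uncolorable H \<longleftrightarrow> bihypergraph H \<and> \<not> colorable H \<and>
     (\<forall>H'. subhypergraph H' H \<and> H' \<noteq> H \<longrightarrow> colorable H')"

text \<open>Vertex v_{i,j} is the pair (i, j) with j in {1,2,3}; the second index is read
  cyclically, so v_{i,4} = v_{i,1} and v_{i,5} = v_{i,2}.\<close>
definition v :: "nat \<Rightarrow> nat \<Rightarrow> nat \<times> nat" where
  "v i j = (i, (j + 2) mod 3 + 1)"

definition Hk_vertices :: "nat \<Rightarrow> (nat \<times> nat) set" where
  "Hk_vertices k = {v i j | i j. i \<in> {1..k} \<and> j \<in> {1..3}}"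

definition Hk_edges :: "nat \<Rightarrow> (nat \<times> nat) set set" where
  "Hk_edges k =
     {{v i 1, v i 2, v i 3} | i. i \<in> {1..k}} \<union>
     {{v (q+1) j, v q j, v q (j+t)} | q j t. q \<in> {1..k-1} \<and> j \<in> {1..3} \<and> t \<in> {1,2}}"

definition Hk :: "nat \<Rightarrow> (nat \<times> nat) set \<times> (nat \<times> nat) set set" where
  "Hk k = (Hk_vertices k, Hk_edges k)"

definition Hmod :: "nat \<Rightarrow> (nat \<times> nat) set \<times> (nat \<times> nat) set set" where
  "Hmod k = (Hk_vertices (2*k),
     (Hk_edges (2*k) - {{v (2*k) 1, v (2*k) 2, v (2*k) 3}}) \<union>
     {{v 1 j, v (2*k) (j+1), v (2*k) (j+2)} | j. j \<in> {1..3}})"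

end

theory Submission
  imports Defs
begin

text \<open>In a proper colouring every edge of the 3-uniform hypergraph carries exactly two colours.
  So the triangle of layer 1 has one special position p coloured b and two positions coloured a.
  The six links into the next layer force its position p to be coloured a and the other two b
  (the triangle of the next layer excludes the third option), i.e. the pattern propagates with
  the two colours swapped. After an even number of steps layer 2k-1 again looks like layer 1,
  and its links force v(2k,p+1) and v(2k,p+2) to colour b, the colour of v(1,p): the added edge
  through v(1,p) is monochromatic. Conversely, once an edge is deleted the propagation can be
  broken: the alternating pattern itself works without a closing edge, two alternating patterns
  with different special positions can be spliced at a deleted link, and a deleted triangle
  can be made monochromatic, with fresh colours above it.\<close>

definition two_colored :: "'c \<Rightarrow> 'c \<Rightarrow> 'c \<Rightarrow> bool" where
  "two_colored x y z \<longleftrightarrow> card {x, y, z} = 2"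

lemma two_colored_iff: "two_colored x y z \<longleftrightarrow> \<not> (x = y \<and> y = z) \<and> (x = y \<or> y = z \<or> x = z)"
  by (auto simp: two_colored_def card_insert_if)

lemma two_colored_same: "two_colored y a a \<longleftrightarrow> y \<noteq> a"
  by (auto simp: two_colored_iff)

lemma two_colored_distinct: "a \<noteq> b \<Longrightarrow> two_colored y a b \<longleftrightarrow> y = a \<or> y = b"
  by (auto simp: two_colored_iff)

lemma proper_triple_iff_two_colored:
  assumes "distinct [x, y, z]"
  shows "1 < card (f ` {x, y, z}) \<and> card (f ` {x, y, z}) < card {x, y, z}
    \<longleftrightarrow> two_colored (f x) (f y) (f z)"
  using assms by (auto simp: two_colored_iff card_insert_if)

lemma proper_coloring_two_colored:
  assumes "proper_coloring H f" "{x, y, z} \<in> snd H" "distinct [x, y, z]"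
  shows "two_colored (f x) (f y) (f z)"
  using assms proper_triple_iff_two_colored[of x y z f] by (auto simp: proper_coloring_def)

lemma proper_coloring_mono:
  "proper_coloring (V, E) f \<Longrightarrow> E' \<subseteq> E \<Longrightarrow> proper_coloring (V', E') f"
  by (auto simp: proper_coloring_def)

lemma bihypergraph_if_uniform:
  assumes "finite V" "\<And>e. e \<in> E \<Longrightarrow> e \<subseteq> V \<and> card e = n"
  shows "bihypergraph (V, E)"
  unfolding bihypergraph_def
proof (intro conjI ballI impI)
  fix e e' assume "e \<in> snd (V, E)" "e' \<in> snd (V, E)" "e \<subseteq> e'"
  with assms show "e = e'" by (metis card_subset_eq finite_subset snd_conv)
qed (use assms in auto)

lemma minimal_uncolorableI:
  assumes "bihypergraph H" "\<not> colorable H" "fst H \<subseteq> \<Union> (snd H)"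
    and "\<And>e. e \<in> snd H \<Longrightarrow> colorable (fst H, snd H - {e})"
  shows "minimal_uncolorable H"
  unfolding minimal_uncolorable_def
proof (intro conjI allI impI)
  fix H' assume H': "subhypergraph H' H \<and> H' \<noteq> H"
  have "snd H' \<noteq> snd H"
  proof
    assume "snd H' = snd H"
    moreover have "\<Union> (snd H') \<subseteq> fst H'"
      using H' by (auto simp: subhypergraph_def bihypergraph_def)
    ultimately have "fst H' = fst H" using H' assms(3) by (auto simp: subhypergraph_def)
    with \<open>snd H' = snd H\<close> H' show False by (simp add: prod_eq_iff)
  qed
  then obtain e where "e \<in> snd H" "snd H' \<subseteq> snd H - {e}"
    using H' by (auto simp: subhypergraph_def)
  with assms(4) show "colorable H'"
    by (metis colorable_def proper_coloring_mono prod.collapse)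
qed (use assms in auto)

lemma v_simps [simp]:
  "v i 1 = (i, 1)" "v i (Suc 0) = (i, 1)" "v i 2 = (i, 2)" "v i 3 = (i, 3)"
  "v i 4 = (i, 1)" "v i 5 = (i, 2)" "v i (Suc (Suc 0)) = (i, 2)" "v i (Suc (Suc (Suc 0))) = (i, 3)"
  by (simp_all add: v_def)

lemma position_cases: "(j::nat) \<in> {1..3} \<Longrightarrow> j = 1 \<or> j = 2 \<or> j = 3"
  by auto

lemma v_eq_pair: "j \<in> {1..3} \<Longrightarrow> v i j = (i, j)"
  unfolding v_def by (simp, presburger)

lemma fst_v [simp]: "fst (v i j) = i"
  by (simp add: v_def)

definition triangle :: "nat \<Rightarrow> (nat \<times> nat) set" where
  "triangle i = {v i 1, v i 2, v i 3}"

definition link :: "nat \<Rightarrow> nat \<Rightarrow> nat \<Rightarrow> (nat \<times> nat) set" where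
  "link q j t = {v (q+1) j, v q j, v q (j+t)}"

definition closing_edge :: "nat \<Rightarrow> nat \<Rightarrow> (nat \<times> nat) set" where
  "closing_edge k j = {v 1 j, v (2*k) (j+1), v (2*k) (j+2)}"

lemma fst_mem_triangle: "x \<in> triangle i \<Longrightarrow> fst x = i"
  by (auto simp: triangle_def)

lemma triangle_eq_iff [simp]: "triangle i = triangle i' \<longleftrightarrow> i = i'"
  using fst_mem_triangle[of "v i 1"] by (auto simp: triangle_def simp del: v_simps)

lemma link_neq_triangle: "q \<noteq> i \<Longrightarrow> link q j t \<noteq> triangle i"
  using fst_mem_triangle[of "v q j"] by (auto simp: link_def)

lemma closing_edge_neq_triangle: "i \<noteq> 1 \<Longrightarrow> closing_edge k j \<noteq> triangle i"
  using fst_mem_triangle[of "v 1 j"] by (auto simp: closing_edge_def)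

lemma edges_Hmod:
  assumes "k \<ge> 1"
  shows "snd (Hmod k) = triangle ` {1..<2*k}
    \<union> {link q j t | q j t. q \<in> {1..<2*k} \<and> j \<in> {1..3} \<and> t \<in> {1,2}}
    \<union> closing_edge k ` {1..3}"
proof -
  have "{1..2*k} = insert (2*k) {1..<2*k}" "{1..2*k-1} = {1..<2*k}"
    using assms by auto
  moreover have "2*k \<noteq> 1" by arith
  ultimately show ?thesis
    unfolding Hmod_def Hk_edges_def snd_conv
      triangle_def[symmetric] link_def[symmetric] closing_edge_def[symmetric]
    by (auto simp: link_neq_triangle link_neq_triangle[symmetric]
        closing_edge_neq_triangle closing_edge_neq_triangle[symmetric])
qed

lemma distinct_triangle: "distinct [v i 1, v i 2, v i 3]"
  by simp

lemma distinct_link: "t \<in> {1,2} \<Longrightarrow> distinct [v (q+1) j, v q j, v q (j+t)]"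
  by (auto simp: v_def) presburger+

lemma distinct_closing_edge: "k \<ge> 1 \<Longrightarrow> distinct [v 1 j, v (2*k) (j+1), v (2*k) (j+2)]"
  by (auto simp: v_def) presburger+

lemma v_mem_Hk_vertices: "i \<in> {1..n} \<Longrightarrow> v i j \<in> Hk_vertices n"
proof -
  assume "i \<in> {1..n}"
  moreover have "v i j = v i ((j+2) mod 3 + 1)" "(j+2) mod 3 + 1 \<in> {1..3}"
    by (auto simp: v_def)
  ultimately show ?thesis
    unfolding Hk_vertices_def by blast
qed

lemma finite_Hk_vertices: "finite (Hk_vertices n)"
proof (rule finite_subset)
  show "Hk_vertices n \<subseteq> {1..n} \<times> {1..3}"
    by (auto simp: Hk_vertices_def v_def)
qed simp

lemma edge_Hmod_cases:
  assumes "k \<ge> 1" "e \<in> snd (Hmod k)"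
  obtains (triangle) i where "i \<in> {1..<2*k}" "e = triangle i"
  | (link) q j t where "q \<in> {1..<2*k}" "j \<in> {1..3}" "t \<in> {1,2}" "e = link q j t"
  | (closing) j where "j \<in> {1..3}" "e = closing_edge k j"
  using assms unfolding edges_Hmod[OF assms(1)] by blast

lemma edge_Hmod_subset_card:
  assumes "k \<ge> 1" "e \<in> snd (Hmod k)"
  shows "e \<subseteq> Hk_vertices (2*k) \<and> card e = 3"
  using assms
proof (cases rule: edge_Hmod_cases)
  case (triangle i)
  then show ?thesis
    using distinct_card[OF distinct_triangle] v_mem_Hk_vertices[of i "2*k"]
    by (auto simp: triangle_def simp del: v_simps)
next
  case (link q j t)
  then show ?thesis
    using distinct_card[OF distinct_link[of t q j]] v_mem_Hk_vertices[of q "2*k"]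
      v_mem_Hk_vertices[of "q+1" "2*k"]
    by (auto simp: link_def)
next
  case closing
  then show ?thesis
    using distinct_card[OF distinct_closing_edge[OF assms(1)]] assms(1)
      v_mem_Hk_vertices[of 1 "2*k"] v_mem_Hk_vertices[of "2*k" "2*k"]
    by (auto simp: closing_edge_def)
qed

lemma bihypergraph_Hmod: "k \<ge> 1 \<Longrightarrow> bihypergraph (Hmod k)"
  using bihypergraph_if_uniform[of "fst (Hmod k)" "snd (Hmod k)"] edge_Hmod_subset_card
  by (simp add: Hmod_def finite_Hk_vertices)

lemma Hmod_vertices_covered:
  assumes "k \<ge> 1"
  shows "fst (Hmod k) \<subseteq> \<Union> (snd (Hmod k))"
proof
  fix x assume "x \<in> fst (Hmod k)"
  then obtain i j where x: "x = v i j" "i \<in> {1..2*k}" "j \<in> {1..3}"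
    by (auto simp: Hmod_def Hk_vertices_def)
  show "x \<in> \<Union> (snd (Hmod k))"
  proof (cases "i = 2*k")
    case True
    have "2*k-1 \<in> {1..<2*k}"
      using assms by auto
    then have "link (2*k-1) j 1 \<in> snd (Hmod k)"
      unfolding edges_Hmod[OF assms] using x(3) by blast
    moreover have "x \<in> link (2*k-1) j 1"
      using assms x True by (simp add: link_def)
    ultimately show ?thesis by blast
  next
    case False
    with assms x have "triangle i \<in> snd (Hmod k)" "x \<in> triangle i"
      by (auto simp: edges_Hmod triangle_def v_eq_pair)
    then show ?thesis by blast
  qed
qed

lemma Hmod_proper_coloring_two_colored:
  assumes "k \<ge> 1" and f: "proper_coloring (Hmod k) f"
  shows "i \<in> {1..<2*k} \<Longrightarrow> two_colored (f (v i 1)) (f (v i 2)) (f (v i 3))"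
    and "q \<in> {1..<2*k} \<Longrightarrow> j \<in> {1..3} \<Longrightarrow> t \<in> {1,2} \<Longrightarrow>
      two_colored (f (v (q+1) j)) (f (v q j)) (f (v q (j+t)))"
    and "j \<in> {1..3} \<Longrightarrow> two_colored (f (v 1 j)) (f (v (2*k) (j+1))) (f (v (2*k) (j+2)))"
proof -
  note two_colored = proper_coloring_two_colored[OF f]
  show "i \<in> {1..<2*k} \<Longrightarrow> two_colored (f (v i 1)) (f (v i 2)) (f (v i 3))"
    using two_colored[OF _ distinct_triangle] by (auto simp: edges_Hmod[OF assms(1)] triangle_def)
  show "q \<in> {1..<2*k} \<Longrightarrow> j \<in> {1..3} \<Longrightarrow> t \<in> {1,2} \<Longrightarrow>
      two_colored (f (v (q+1) j)) (f (v q j)) (f (v q (j+t)))"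
    using two_colored[OF _ distinct_link] unfolding edges_Hmod[OF assms(1)] link_def by blast
  show "j \<in> {1..3} \<Longrightarrow> two_colored (f (v 1 j)) (f (v (2*k) (j+1))) (f (v (2*k) (j+2)))"
    using two_colored[OF _ distinct_closing_edge[OF assms(1)]]
    unfolding edges_Hmod[OF assms(1)] closing_edge_def by blast
qed

lemma proper_coloring_Hmod_minus_edge:
  assumes "k \<ge> 1"
    and triangles: "\<And>i. i \<in> {1..<2*k} \<Longrightarrow> triangle i \<noteq> e \<Longrightarrow>
      two_colored (f (v i 1)) (f (v i 2)) (f (v i 3))"
    and links: "\<And>q j t. q \<in> {1..<2*k} \<Longrightarrow> j \<in> {1..3} \<Longrightarrow> t \<in> {1,2} \<Longrightarrow>
      link q j t \<noteq> e \<Longrightarrow> two_colored (f (v (q+1) j)) (f (v q j)) (f (v q (j+t)))"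
    and closing_edges: "\<And>j. j \<in> {1..3} \<Longrightarrow> closing_edge k j \<noteq> e \<Longrightarrow>
      two_colored (f (v 1 j)) (f (v (2*k) (j+1))) (f (v (2*k) (j+2)))"
  shows "proper_coloring (V, snd (Hmod k) - {e}) f"
  unfolding proper_coloring_def snd_conv
proof
  fix e' assume e': "e' \<in> snd (Hmod k) - {e}"
  from assms(1) DiffD1[OF e'] show "1 < card (f ` e') \<and> card (f ` e') < card e'"
  proof (cases rule: edge_Hmod_cases)
    case (triangle i)
    with e' triangles have "two_colored (f (v i 1)) (f (v i 2)) (f (v i 3))"
      by blast
    then show ?thesis
      unfolding triangle(2) triangle_def
      by (simp only: proper_triple_iff_two_colored[OF distinct_triangle])
  next
    case (link q j t)
    with e' links have "two_colored (f (v (q+1) j)) (f (v q j)) (f (v q (j+t)))"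
      by blast
    then show ?thesis
      unfolding link(4) link_def
      by (simp only: proper_triple_iff_two_colored[OF distinct_link[OF link(3)]])
  next
    case (closing j)
    with e' closing_edges have "two_colored (f (v 1 j)) (f (v (2*k) (j+1))) (f (v (2*k) (j+2)))"
      by blast
    then show ?thesis
      unfolding closing(2) closing_edge_def
      by (simp only: proper_triple_iff_two_colored[OF distinct_closing_edge[OF assms(1)]])
  qed
qed

definition layer_pattern :: "(nat \<times> nat \<Rightarrow> 'c) \<Rightarrow> nat \<Rightarrow> nat \<Rightarrow> 'c \<Rightarrow> 'c \<Rightarrow> bool" where
  "layer_pattern f i p a b \<longleftrightarrow> (\<forall>m\<in>{1..3}. f (v i m) = (if m = p then b else a))"

lemma layer_pattern_iff:
  "layer_pattern f i p a b \<longleftrightarrow> f (i, 1) = (if p = 1 then b else a) \<and>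
    f (i, 2) = (if p = 2 then b else a) \<and> f (i, 3) = (if p = 3 then b else a)"
proof -
  have "{1..3::nat} = {1, 2, 3}" by auto
  then show ?thesis by (simp add: layer_pattern_def)
qed

lemma two_colored_layer_pattern:
  assumes "two_colored (f (v i 1)) (f (v i 2)) (f (v i 3))"
  obtains a b p where "a \<noteq> b" "p \<in> {1..3}" "layer_pattern f i p a b"
proof -
  consider "f (v i 1) = f (v i 2)" "f (v i 3) \<noteq> f (v i 1)"
    | "f (v i 2) = f (v i 3)" "f (v i 1) \<noteq> f (v i 2)"
    | "f (v i 1) = f (v i 3)" "f (v i 2) \<noteq> f (v i 1)"
    using assms unfolding two_colored_iff by metis
  then show thesis
  proof cases
    case 1
    then show thesis by (intro that[of "f (v i 1)" "f (v i 3)" 3]) (auto simp: layer_pattern_iff)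
  next
    case 2
    then show thesis by (intro that[of "f (v i 2)" "f (v i 1)" 1]) (auto simp: layer_pattern_iff)
  next
    case 3
    then show thesis by (intro that[of "f (v i 1)" "f (v i 2)" 2]) (auto simp: layer_pattern_iff)
  qed
qed

lemma layer_pattern_next_off:
  assumes "a \<noteq> b" "p \<in> {1..3}" "layer_pattern f i p a b"
    and links: "\<And>j t. j \<in> {1..3} \<Longrightarrow> t \<in> {1,2} \<Longrightarrow>
      two_colored (f (v (i+1) j)) (f (v i j)) (f (v i (j+t)))"
  shows "f (v (i+1) (p+1)) = b \<and> f (v (i+1) (p+2)) = b"
proof -
  note links = links[of 1 1] links[of 1 2] links[of 2 1] links[of 2 2] links[of 3 1] links[of 3 2]
  from position_cases[OF assms(2)] show ?thesis
    by (elim disjE) (use assms(1,3) links in \<open>simp_all add: layer_pattern_iff two_colored_same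
      two_colored_distinct two_colored_distinct[OF not_sym]\<close>)
qed

lemma layer_pattern_next:
  assumes "a \<noteq> b" "p \<in> {1..3}" "layer_pattern f i p a b"
    and links: "\<And>j t. j \<in> {1..3} \<Longrightarrow> t \<in> {1,2} \<Longrightarrow>
      two_colored (f (v (i+1) j)) (f (v i j)) (f (v i (j+t)))"
    and triangle: "two_colored (f (v (i+1) 1)) (f (v (i+1) 2)) (f (v (i+1) 3))"
  shows "layer_pattern f (i+1) p b a"
proof -
  have "f (v (i+1) (p+1)) = b \<and> f (v (i+1) (p+2)) = b"
    using layer_pattern_next_off[OF assms(1-3) links] .
  moreover have "two_colored (f (v (i+1) p)) (f (v i p)) (f (v i (p+1)))"
    using links[OF assms(2), of 1] by simp
  ultimately show ?thesis
    using position_cases[OF assms(2)] assms(1,3) triangle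
    by (elim disjE) (auto simp: layer_pattern_iff two_colored_iff)
qed

lemma Hmod_not_colorable:
  assumes k: "k \<ge> 1"
  shows "\<not> colorable (Hmod k)"
proof
  assume "colorable (Hmod k)"
  then obtain f where f: "proper_coloring (Hmod k) f"
    unfolding colorable_def by blast
  note triangles = Hmod_proper_coloring_two_colored(1)[OF k f]
    and links = Hmod_proper_coloring_two_colored(2)[OF k f]
    and closing = Hmod_proper_coloring_two_colored(3)[OF k f]
  obtain a b p where ab: "a \<noteq> b" and p: "p \<in> {1..3}" and first: "layer_pattern f 1 p a b"
  proof (rule two_colored_layer_pattern)
    show "two_colored (f (v 1 1)) (f (v 1 2)) (f (v 1 3))"
      using triangles k by simp
  qed
  have odd_layers: "layer_pattern f (2*n+1) p a b" if "2*n+1 < 2*k" for n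
    using that
  proof (induction n)
    case 0
    then show ?case using first by simp
  next
    case (Suc n)
    have "layer_pattern f (2*n+2) p b a"
      using layer_pattern_next[OF ab p Suc.IH links triangles] Suc.prems by simp
    from layer_pattern_next[OF not_sym[OF ab] p this links triangles] Suc.prems
    show ?case by simp
  qed
  have "2*(k-1)+1 = 2*k-1" "2*k-1 < 2*k"
    using k by auto
  then have "layer_pattern f (2*k-1) p a b"
    using odd_layers[of "k-1"] by metis
  from layer_pattern_next_off[OF ab p this links] k
  have "f (v (2*k) (p+1)) = b" "f (v (2*k) (p+2)) = b"
    by simp_all
  moreover have "f (v 1 p) = b"
    using first p by (simp add: layer_pattern_def)
  ultimately show False
    using closing[OF p] by (simp add: two_colored_iff)
qed

text \<open>Up to renaming the colours, this is the colouring forced on layers 1 to 2k-1, with special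
  position p; it only fails on the closing edge through v(1,p).\<close>

definition alternating_coloring :: "nat \<Rightarrow> nat \<times> nat \<Rightarrow> nat" where
  "alternating_coloring p x = (if (snd x = p) \<noteq> even (fst x) then 1 else 0)"

lemma alternating_coloring_triangle:
  "p \<in> {1..3} \<Longrightarrow> two_colored (alternating_coloring p (v i 1))
     (alternating_coloring p (v i 2)) (alternating_coloring p (v i 3))"
  using position_cases[of p]
  by (cases "even i") (auto simp: two_colored_iff alternating_coloring_def)

lemma alternating_coloring_link:
  "p \<in> {1..3} \<Longrightarrow> j \<in> {1..3} \<Longrightarrow> t \<in> {1,2} \<Longrightarrow>
   two_colored (alternating_coloring p (v (q+1) j)) (alternating_coloring p (v q j))
     (alternating_coloring p (v q (j+t)))"
  using position_cases[of p] position_cases[of j]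
  by (cases "even q") (auto simp: two_colored_iff alternating_coloring_def)

lemma alternating_coloring_closing_edge:
  "p \<in> {1..3} \<Longrightarrow> j \<in> {1..3} \<Longrightarrow> j \<noteq> p \<Longrightarrow>
   two_colored (alternating_coloring p (v 1 j)) (alternating_coloring p (v (2*k) (j+1)))
     (alternating_coloring p (v (2*k) (j+2)))"
  using position_cases[of p] position_cases[of j]
  by (auto simp: two_colored_iff alternating_coloring_def)

definition spliced_coloring :: "nat \<Rightarrow> nat \<Rightarrow> nat \<Rightarrow> nat \<times> nat \<Rightarrow> nat" where
  "spliced_coloring q r j x =
     (if fst x \<le> q then alternating_coloring r x else alternating_coloring j x)"

lemma spliced_coloring_triangle:
  "r \<in> {1..3} \<Longrightarrow> j \<in> {1..3} \<Longrightarrow> two_colored (spliced_coloring q r j (v i 1))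
     (spliced_coloring q r j (v i 2)) (spliced_coloring q r j (v i 3))"
  using alternating_coloring_triangle[of r i] alternating_coloring_triangle[of j i]
  by (simp add: spliced_coloring_def)

lemma spliced_coloring_splice:
  assumes "j \<in> {1..3}" "t \<in> {1,2}" "r = (j + 2*t + 2) mod 3 + 1"
    and "j' \<in> {1..3}" "t' \<in> {1,2}" "(j', t') \<noteq> (j, t)"
  shows "two_colored (spliced_coloring q r j (v (q+1) j')) (spliced_coloring q r j (v q j'))
     (spliced_coloring q r j (v q (j'+t')))"
  using assms position_cases[of j] position_cases[of j']
  by (cases "even q") (auto simp: spliced_coloring_def alternating_coloring_def two_colored_iff)

lemma spliced_coloring_link:
  assumes "j \<in> {1..3}" "t \<in> {1,2}" "r = (j + 2*t + 2) mod 3 + 1"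
    and "j' \<in> {1..3}" "t' \<in> {1,2}" "(q', j', t') \<noteq> (q, j, t)"
  shows "two_colored (spliced_coloring q r j (v (q'+1) j')) (spliced_coloring q r j (v q' j'))
     (spliced_coloring q r j (v q' (j'+t')))"
proof (cases q' q rule: linorder_cases)
  case less
  have "r \<in> {1..3}" using assms(3) by auto
  with less show ?thesis
    using alternating_coloring_link[of r j' t' q'] assms(4,5) by (simp add: spliced_coloring_def)
next
  case equal
  with assms show ?thesis using spliced_coloring_splice by blast
next
  case greater
  then show ?thesis
    using alternating_coloring_link[of j j' t' q'] assms(1,4,5) by (simp add: spliced_coloring_def)
qed

lemma spliced_coloring_closing_edge:
  assumes "j \<in> {1..3}" "t \<in> {1,2}" "r = (j + 2*t + 2) mod 3 + 1" "1 \<le> q" "q < 2*k"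
    and "j' \<in> {1..3}"
  shows "two_colored (spliced_coloring q r j (v 1 j')) (spliced_coloring q r j (v (2*k) (j'+1)))
     (spliced_coloring q r j (v (2*k) (j'+2)))"
  using assms position_cases[of j] position_cases[of j']
  by (auto simp: spliced_coloring_def alternating_coloring_def two_colored_iff)

text \<open>Layer 2k is constant because the closing edges meet it together with a third colour
  from layer 1.\<close>

definition collapsed_coloring :: "nat \<Rightarrow> nat \<Rightarrow> nat \<times> nat \<Rightarrow> nat" where
  "collapsed_coloring k i x =
     (if fst x < i then alternating_coloring 3 x
      else if fst x = i then (if even i then 1 else 0)
      else if fst x = 2*k then 2
      else 3 - alternating_coloring 3 x)"

lemma collapsed_coloring_triangle:
  "i' \<noteq> i \<Longrightarrow> i' < 2*k \<Longrightarrow> two_colored (collapsed_coloring k i (v i' 1))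
     (collapsed_coloring k i (v i' 2)) (collapsed_coloring k i (v i' 3))"
  by (cases "even i'") (auto simp: two_colored_iff collapsed_coloring_def alternating_coloring_def)

lemma collapsed_coloring_closing_edge:
  "j \<in> {1..3} \<Longrightarrow> 1 \<le> i \<Longrightarrow> i < 2*k \<Longrightarrow>
   two_colored (collapsed_coloring k i (v 1 j)) (collapsed_coloring k i (v (2*k) (j+1)))
     (collapsed_coloring k i (v (2*k) (j+2)))"
  using position_cases[of j]
  by (auto simp: two_colored_iff collapsed_coloring_def alternating_coloring_def)

lemma collapsed_coloring_link:
  assumes "j \<in> {1..3}" "t \<in> {1,2}" "q < 2*k" "i < 2*k"
  shows "two_colored (collapsed_coloring k i (v (q+1) j)) (collapsed_coloring k i (v q j))
    (collapsed_coloring k i (v q (j+t)))"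
proof -
  note simps = two_colored_iff collapsed_coloring_def alternating_coloring_def
  consider "q+1 < i" | "q+1 = i" | "q = i" | "i < q" "q+1 < 2*k" | "i < q" "q+1 = 2*k"
    using assms(3) by linarith
  then show ?thesis
  proof cases
    case 1
    then show ?thesis using position_cases[OF assms(1)] assms(2)
      by (cases "even q") (auto simp: simps)
  next
    case 2
    then show ?thesis using position_cases[OF assms(1)] assms(2,4)
      by (cases "even q") (auto simp: simps)
  next
    case 3
    then show ?thesis using position_cases[OF assms(1)] assms(2,4)
      by (cases "even q"; cases "q+1 = 2*k") (auto simp: simps)
  next
    case 4
    then show ?thesis using position_cases[OF assms(1)] assms(2)
      by (cases "even q") (auto simp: simps)
  next
    case 5
    then have "odd q" by presburger
    with 5 show ?thesis using position_cases[OF assms(1)] assms(2)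
      by (auto simp: simps)
  qed
qed

lemma Hmod_minus_edge_colorable:
  assumes k: "k \<ge> 1" and e: "e \<in> snd (Hmod k)"
  shows "colorable (fst (Hmod k), snd (Hmod k) - {e})"
  using k e
proof (cases rule: edge_Hmod_cases)
  case (triangle i)
  have "proper_coloring (fst (Hmod k), snd (Hmod k) - {e}) (collapsed_coloring k i)"
  proof (rule proper_coloring_Hmod_minus_edge[OF k])
    show "two_colored (collapsed_coloring k i (v i' 1)) (collapsed_coloring k i (v i' 2))
        (collapsed_coloring k i (v i' 3))" if "i' \<in> {1..<2*k}" "triangle i' \<noteq> e" for i'
      using triangle that by (intro collapsed_coloring_triangle) auto
    show "two_colored (collapsed_coloring k i (v (q+1) j)) (collapsed_coloring k i (v q j))
        (collapsed_coloring k i (v q (j+t)))" if "q \<in> {1..<2*k}" "j \<in> {1..3}" "t \<in> {1,2}" for q j t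
      using triangle that by (intro collapsed_coloring_link) auto
    show "two_colored (collapsed_coloring k i (v 1 j)) (collapsed_coloring k i (v (2*k) (j+1)))
        (collapsed_coloring k i (v (2*k) (j+2)))" if "j \<in> {1..3}" for j
      using triangle that by (intro collapsed_coloring_closing_edge) auto
  qed
  then show ?thesis unfolding colorable_def by blast
next
  case (link q j t)
  \<comment> \<open>r is the third position of layer q, j - t read cyclically; the deleted link is then
     the only edge at the splice that becomes monochromatic.\<close>
  define r where "r = (j + 2*t + 2) mod 3 + 1"
  have "proper_coloring (fst (Hmod k), snd (Hmod k) - {e}) (spliced_coloring q r j)"
  proof (rule proper_coloring_Hmod_minus_edge[OF k])
    show "two_colored (spliced_coloring q r j (v i 1)) (spliced_coloring q r j (v i 2))
        (spliced_coloring q r j (v i 3))" for i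
      using link(2) by (intro spliced_coloring_triangle) (auto simp: r_def)
    show "two_colored (spliced_coloring q r j (v (q'+1) j')) (spliced_coloring q r j (v q' j'))
        (spliced_coloring q r j (v q' (j'+t')))"
      if "j' \<in> {1..3}" "t' \<in> {1,2}" "link q' j' t' \<noteq> e" for q' j' t'
      using link that r_def by (intro spliced_coloring_link) auto
    show "two_colored (spliced_coloring q r j (v 1 j')) (spliced_coloring q r j (v (2*k) (j'+1)))
        (spliced_coloring q r j (v (2*k) (j'+2)))" if "j' \<in> {1..3}" for j'
      using link that r_def by (intro spliced_coloring_closing_edge[of j t]) auto
  qed
  then show ?thesis unfolding colorable_def by blast
next
  case (closing p)
  have "proper_coloring (fst (Hmod k), snd (Hmod k) - {e}) (alternating_coloring p)"
  proof (rule proper_coloring_Hmod_minus_edge[OF k])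
    show "two_colored (alternating_coloring p (v i 1)) (alternating_coloring p (v i 2))
        (alternating_coloring p (v i 3))" for i
      using closing by (intro alternating_coloring_triangle)
    show "two_colored (alternating_coloring p (v (q+1) j)) (alternating_coloring p (v q j))
        (alternating_coloring p (v q (j+t)))" if "j \<in> {1..3}" "t \<in> {1,2}" for q j t
      using closing that by (intro alternating_coloring_link)
    show "two_colored (alternating_coloring p (v 1 j)) (alternating_coloring p (v (2*k) (j+1)))
        (alternating_coloring p (v (2*k) (j+2)))" if "j \<in> {1..3}" "closing_edge k j \<noteq> e" for j
      using closing that by (intro alternating_coloring_closing_edge) auto
  qed
  then show ?thesis unfolding colorable_def by blast
qed

theorem mainTheorem15:
  fixes k :: nat
  assumes "k \<ge> 1"
  shows "minimal_uncolorable (Hmod k)"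
proof (rule minimal_uncolorableI)
  show "bihypergraph (Hmod k)" using assms by (rule bihypergraph_Hmod)
  show "\<not> colorable (Hmod k)" using assms by (rule Hmod_not_colorable)
  show "fst (Hmod k) \<subseteq> \<Union> (snd (Hmod k))" using assms by (rule Hmod_vertices_covered)
  show "colorable (fst (Hmod k), snd (Hmod k) - {e})" if "e \<in> snd (Hmod k)" for e
    using assms that by (rule Hmod_minus_edge_colorable)
qed

end
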